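(* Let $\nu_A,\nu_B$ be positive integers and $\hat\lambda_1,\dots,\hat\lambda_n>0$. Consider maximizing $\sum_{i=1}^n\log f_{G}(\hat\lambda_i)$ over $G\in\mathcal G$. Then: (1) a maximizer $\hat G\in\mathcal G$ exists, and every maximizer has total mass $1$ and assigns zero mass to $\{0\}$; (2) every maximizer $\hat G$ satisfies, for all $G\in\mathcal G$, $\frac1n\sum_{i=1}^n f_G(\hat\lambda_i)/f_{\hat G}(\hat\lambda_i)\le1$; (3) every maximizer $\hat G$ is supported on $[\min_i\hat\lambda_i,\max_i\hat\lambda_i]$.
   Context: $\mathcal G$ is the class of positive Borel measures on $[0,\infty)$ with total mass at most $1$. For $l>0$, $\lambda>0$, $p(l\mid\lambda)=\frac{1}{\lambda}\frac{1}{B(\nu_A/2,\nu_B/2)}(\nu_A/\nu_B)^{\nu_A/2}(l/\lambda)^{\nu_A/2-1}(1+\nu_A l/(\nu_B\lambda))^{-(\nu_A+\nu_B)/2}$ (the density of $\lambda F_{\nu_A,\nu_B}$), and $p(l\mid0):=0$. For $G\in\mathcal G$, $f_G(l)=\int_{[0,\infty)}p(l\mid\lambda)\,dG(\lambda)$. *)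

theory Defs
  imports "HOL-Analysis.Analysis"
begin

text \<open>The class of sub-probability Borel measures on [0,\<infinity>), represented as Borel
measures on the real line with no mass on the negative reals.\<close>
definition Gcal :: "real measure set" where
  "Gcal = {G. sets G = sets borel \<and> emeasure G {..<0} = 0 \<and> emeasure G UNIV \<le> 1}"

text \<open>Density of lambda times an F(nuA,nuB) variable at l; p(l|lambda) = 0 for lambda \<le> 0
(only lambda = 0 matters, as measures in Gcal put no mass on negatives).\<close>
definition pF :: "nat \<Rightarrow> nat \<Rightarrow> real \<Rightarrow> real \<Rightarrow> real" where
  "pF nuA nuB l lam =
     (if lam > 0 then
        (1 / lam) * (1 / Beta (real nuA / 2) (real nuB / 2))
        * (real nuA / real nuB) powr (real nuA / 2)
        * (l / lam) powr (real nuA / 2 - 1)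
        * (1 + real nuA * l / (real nuB * lam)) powr (- (real nuA + real nuB) / 2)
      else 0)"

definition fG :: "nat \<Rightarrow> nat \<Rightarrow> real measure \<Rightarrow> real \<Rightarrow> real" where
  "fG nuA nuB G l = (\<integral>lam. pF nuA nuB l lam \<partial>G)"

definition loglik :: "nat \<Rightarrow> nat \<Rightarrow> nat \<Rightarrow> (nat \<Rightarrow> real) \<Rightarrow> real measure \<Rightarrow> ereal" where
  "loglik nuA nuB n lhat G =
     (\<Sum>i<n. if fG nuA nuB G (lhat i) > 0 then ereal (ln (fG nuA nuB G (lhat i))) else -\<infinity>)"

definition is_NPMLE :: "nat \<Rightarrow> nat \<Rightarrow> nat \<Rightarrow> (nat \<Rightarrow> real) \<Rightarrow> real measure \<Rightarrow> bool" where
  "is_NPMLE nuA nuB n lhat G \<longleftrightarrow>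
     G \<in> Gcal \<and> (\<forall>G'\<in>Gcal. loglik nuA nuB n lhat G' \<le> loglik nuA nuB n lhat G)"

end

theory Submission
  imports Defs "HOL-Probability.Probability"
begin

text \<open>The kernel \<open>p(l | \<lambda>)\<close> is unimodal in \<open>\<lambda>\<close> with mode \<open>\<lambda> = l\<close>: up to terms
  not depending on \<open>\<lambda>\<close>, its logarithm is
  \<open>\<nu>\<^sub>B/2 ln \<lambda> - (\<nu>\<^sub>A + \<nu>\<^sub>B)/2 ln (\<lambda> + \<nu>\<^sub>A l/\<nu>\<^sub>B)\<close>, whose derivative has the sign of \<open>l - \<lambda>\<close>.
  Hence pushing \<open>G\<close> forward under the clamp onto \<open>[min \<lambda>\<^sub>i, max \<lambda>\<^sub>i]\<close> does not decrease
  any \<open>f\<^sub>G(\<lambda>\<^sub>i)\<close>, and increases all of them strictly if \<open>G\<close> charges the complement,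
  while rescaling \<open>G\<close> to total mass \<open>1\<close> multiplies them by \<open>1 / G(\<real>)\<close>.  So a maximizer
  is a probability measure on \<open>[min \<lambda>\<^sub>i, max \<lambda>\<^sub>i] \<subseteq> (0, \<infinity>)\<close>, and a maximizer exists
  by Helly's selection theorem applied to a maximizing sequence of such measures, on which
  the kernels are bounded and continuous.  The inequality of part (2) is the first-order
  condition for the concave log-likelihood along the segment from \<open>Ghat\<close> to \<open>G\<close>.\<close>

section \<open>The kernel\<close>

lemma Gamma_half_of_nat_nonneg: "Gamma (real k / 2) \<ge> 0"
  by (cases "k = 0") (auto intro: less_imp_le)

lemma pF_nonneg: "pF a b l lam \<ge> 0"
proof -
  have "Beta (real a / 2) (real b / 2) \<ge> 0"
    using Gamma_half_of_nat_nonneg[of a] Gamma_half_of_nat_nonneg[of b]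
      Gamma_half_of_nat_nonneg[of "a + b"]
    by (simp add: Beta_def add_divide_distrib)
  then show ?thesis
    unfolding pF_def by (auto intro!: mult_nonneg_nonneg)
qed

lemma pF_pos:
  assumes "a > 0" "b > 0" "l > 0" "lam > 0"
  shows "pF a b l lam > 0"
proof -
  have "Beta (real a / 2) (real b / 2) > 0"
    using assms by (simp add: Beta_def)
  moreover have "1 + real a * l / (real b * lam) > 0"
    using assms by (simp add: add_pos_nonneg)
  ultimately show ?thesis
    using assms unfolding pF_def by simp
qed

lemma pF_measurable [measurable]: "pF a b l \<in> borel_measurable borel"
  unfolding pF_def by measurable

lemma pF_continuous_on:
  assumes "a > 0" "b > 0" "l > 0"
  shows "continuous_on {0<..} (pF a b l)"
proof -
  have base_pos: "1 + real a * l / (real b * lam) > 0" if "lam > 0" for lam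
    using assms that by (simp add: add_pos_nonneg)
  have "continuous_on {0<..} (\<lambda>lam. (1 / lam) * (1 / Beta (real a / 2) (real b / 2))
        * (real a / real b) powr (real a / 2) * (l / lam) powr (real a / 2 - 1)
        * (1 + real a * l / (real b * lam)) powr (- (real a + real b) / 2))"
    using assms base_pos
    by (intro continuous_intros continuous_on_powr) (auto simp: less_imp_neq[symmetric])
  then show ?thesis
    by (rule continuous_on_cong[THEN iffD1, rotated 2]) (auto simp: pF_def)
qed

definition pF_log_kernel :: "nat \<Rightarrow> nat \<Rightarrow> real \<Rightarrow> real \<Rightarrow> real" where
  "pF_log_kernel a b l lam =
     real b / 2 * ln lam - (real a + real b) / 2 * ln (lam + real a / real b * l)"

lemma ln_pF:
  assumes "a > 0" "b > 0" "l > 0" "lam > 0"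
  shows "ln (pF a b l lam) = ln (1 / Beta (real a / 2) (real b / 2))
     + real a / 2 * ln (real a / real b) + (real a / 2 - 1) * ln l + pF_log_kernel a b l lam"
proof -
  have B: "Beta (real a / 2) (real b / 2) > 0"
    using assms by (simp add: Beta_def)
  have c: "lam + real a / real b * l > 0"
    using assms by (simp add: add_pos_nonneg)
  have base: "1 + real a * l / (real b * lam) = (lam + real a / real b * l) / lam"
    using assms by (simp add: field_simps)
  define X1 where "X1 = 1 / lam"
  define X2 where "X2 = 1 / Beta (real a / 2) (real b / 2)"
  define X3 where "X3 = (real a / real b) powr (real a / 2)"
  define X4 where "X4 = (l / lam) powr (real a / 2 - 1)"
  define X5 where "X5 = (1 + real a * l / (real b * lam)) powr (- (real a + real b) / 2)"
  have "X1 > 0" "X2 > 0" "X3 > 0" "X4 > 0" "X5 > 0"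
    unfolding X1_def X2_def X3_def X4_def X5_def using assms B c base by auto
  moreover have "pF a b l lam = X1 * X2 * X3 * X4 * X5"
    unfolding pF_def X1_def X2_def X3_def X4_def X5_def using assms by simp
  ultimately have "ln (pF a b l lam) = ln X1 + ln X2 + ln X3 + ln X4 + ln X5"
    by (simp add: ln_mult)
  also have "\<dots> = - ln lam + ln (1 / Beta (real a / 2) (real b / 2))
      + real a / 2 * ln (real a / real b) + (real a / 2 - 1) * (ln l - ln lam)
      + (- (real a + real b) / 2) * (ln (lam + real a / real b * l) - ln lam)"
    using assms c
    unfolding X1_def X2_def X3_def X4_def X5_def
    by (simp add: ln_powr ln_div base ln_inverse del: divide_const_simps)
  also have "\<dots> = ln (1 / Beta (real a / 2) (real b / 2)) + real a / 2 * ln (real a / real b)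
      + (real a / 2 - 1) * ln l + pF_log_kernel a b l lam"
    unfolding pF_log_kernel_def by (simp add: algebra_simps add_divide_distrib diff_divide_distrib)
  finally show ?thesis .
qed

lemma pF_less_pF_iff:
  assumes "a > 0" "b > 0" "l > 0" "x > 0" "y > 0"
  shows "pF a b l x < pF a b l y \<longleftrightarrow> pF_log_kernel a b l x < pF_log_kernel a b l y"
proof -
  have "pF a b l x < pF a b l y \<longleftrightarrow> ln (pF a b l x) < ln (pF a b l y)"
    using assms by (simp add: pF_pos)
  also have "\<dots> \<longleftrightarrow> pF_log_kernel a b l x < pF_log_kernel a b l y"
    using assms by (simp add: ln_pF)
  finally show ?thesis .
qed

lemma pF_log_kernel_deriv:
  assumes "a > 0" "b > 0" "l > 0" "lam > 0"
  shows "(pF_log_kernel a b l has_real_derivative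
           real a * (l - lam) / (2 * lam * (lam + real a / real b * l))) (at lam)"
proof -
  define c where "c = lam + real a / real b * l"
  have c: "c > 0"
    using assms by (simp add: c_def add_pos_nonneg)
  have "((\<lambda>x. ln (x + real a / real b * l)) has_real_derivative 1 / c) (at lam)"
    unfolding c_def using c[unfolded c_def] by (auto intro!: derivative_eq_intros)
  then have "(pF_log_kernel a b l has_real_derivative
      real b / 2 * (1 / lam) - (real a + real b) / 2 * (1 / c)) (at lam)"
    unfolding pF_log_kernel_def[abs_def] using assms by (intro DERIV_diff DERIV_cmult DERIV_ln_divide)
  moreover have "real b / 2 * (1 / lam) - (real a + real b) / 2 * (1 / c)
      = (real b * c - (real a + real b) * lam) / (2 * lam * c)"
    using assms c by (simp add: field_simps)
  moreover have "real b * c - (real a + real b) * lam = real a * (l - lam)"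
    using assms by (simp add: c_def algebra_simps)
  ultimately show ?thesis
    by (simp add: c_def)
qed

lemma pF_log_kernel_continuous_on:
  assumes "a > 0" "b > 0" "l > 0" "{x..y} \<subseteq> {0<..}"
  shows "continuous_on {x..y} (pF_log_kernel a b l)"
  using assms
  by (intro continuous_at_imp_continuous_on ballI DERIV_isCont[OF pF_log_kernel_deriv]) auto

lemma pF_strict_mono_below_mode:
  assumes "a > 0" "b > 0" "l > 0" "0 < x" "x < y" "y \<le> l"
  shows "pF a b l x < pF a b l y"
proof -
  have "pF_log_kernel a b l x < pF_log_kernel a b l y"
  proof (rule DERIV_pos_imp_increasing_open[OF \<open>x < y\<close>])
    fix z assume "x < z" "z < y"
    with assms show "\<exists>d. DERIV (pF_log_kernel a b l) z :> d \<and> d > 0"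
      using pF_log_kernel_deriv[of a b l z]
      by (intro exI[of _ "real a * (l - z) / (2 * z * (z + real a / real b * l))"])
         (auto intro!: divide_pos_pos mult_pos_pos add_pos_nonneg)
  qed (use assms in \<open>auto intro: pF_log_kernel_continuous_on\<close>)
  with assms show ?thesis
    by (simp add: pF_less_pF_iff)
qed

lemma pF_strict_antimono_above_mode:
  assumes "a > 0" "b > 0" "l > 0" "l \<le> x" "x < y"
  shows "pF a b l y < pF a b l x"
proof -
  have "pF_log_kernel a b l y < pF_log_kernel a b l x"
  proof (rule DERIV_neg_imp_decreasing_open[OF \<open>x < y\<close>])
    fix z assume "x < z" "z < y"
    with assms show "\<exists>d. DERIV (pF_log_kernel a b l) z :> d \<and> d < 0"
      using pF_log_kernel_deriv[of a b l z]
      by (intro exI[of _ "real a * (l - z) / (2 * z * (z + real a / real b * l))"])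
         (auto intro!: divide_neg_pos mult_pos_neg mult_pos_pos add_pos_nonneg)
  qed (use assms in \<open>auto intro: pF_log_kernel_continuous_on\<close>)
  with assms show ?thesis
    by (simp add: pF_less_pF_iff)
qed

lemma pF_le_mode:
  assumes "a > 0" "b > 0" "l > 0"
  shows "pF a b l lam \<le> pF a b l l"
proof -
  consider "lam \<le> 0" | "0 < lam" "lam < l" | "l \<le> lam"
    by linarith
  then show ?thesis
  proof cases
    case 1
    then show ?thesis using pF_nonneg[of a b l l] by (simp add: pF_def)
  next
    case 2
    then show ?thesis using pF_strict_mono_below_mode[of a b l lam l] assms by simp
  next
    case 3
    then show ?thesis using pF_strict_antimono_above_mode[of a b l l lam] assms
      by (cases "lam = l") auto
  qed
qed

lemma clamp_real: "(lo::real) \<le> hi \<Longrightarrow> clamp lo hi x = max lo (min hi x)"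
  unfolding clamp_def Basis_real_def by auto

lemma clamp_measurable [measurable]: "clamp lo hi \<in> borel_measurable (borel :: real measure)"
  using clamp_continuous_on[OF continuous_on_id, of UNIV lo hi]
  by (intro borel_measurable_continuous_onI) simp

lemma pF_less_pF_clamp:
  assumes "a > 0" "b > 0" "0 < lo" "lo \<le> l" "l \<le> hi" "x \<notin> {lo..hi}"
  shows "pF a b l x < pF a b l (clamp lo hi x)"
proof (cases "x < lo")
  case True
  then have "clamp lo hi x = lo"
    using assms by (simp add: clamp_real)
  with True assms show ?thesis
    using pF_strict_mono_below_mode[of a b l x lo] pF_pos[of a b l lo]
    by (cases "x > 0") (auto simp: pF_def)
next
  case False
  then have "hi < x" "clamp lo hi x = hi"
    using assms by (auto simp: clamp_real)
  with assms show ?thesis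
    using pF_strict_antimono_above_mode[of a b l hi x] by simp
qed

lemma pF_le_pF_clamp:
  assumes "a > 0" "b > 0" "0 < lo" "lo \<le> l" "l \<le> hi"
  shows "pF a b l x \<le> pF a b l (clamp lo hi x)"
  using assms pF_less_pF_clamp[OF assms, of x]
  by (cases "x \<in> {lo..hi}") (auto simp: clamp_real)

section \<open>Sub-probability measures on \<open>[0, \<infinity>)\<close>\<close>

lemma Gcal_sets: "G \<in> Gcal \<Longrightarrow> sets G = sets borel"
  unfolding Gcal_def by auto

lemma Gcal_space: "G \<in> Gcal \<Longrightarrow> space G = UNIV"
  using sets_eq_imp_space_eq[OF Gcal_sets] by auto

lemma Gcal_measurable: "G \<in> Gcal \<Longrightarrow> measurable G M = measurable borel M"
  by (intro measurable_cong_sets) (simp_all add: Gcal_sets)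

lemma Gcal_finite_measure: "G \<in> Gcal \<Longrightarrow> finite_measure G"
  unfolding Gcal_def
  by (intro finite_measureI)
     (auto simp: sets_eq_imp_space_eq[of G borel] top_unique
           dest: order.strict_trans1[OF _ ennreal_one_less_top])

lemma Gcal_measure_le_1: "G \<in> Gcal \<Longrightarrow> measure G UNIV \<le> 1"
  unfolding Gcal_def measure_def by (auto simp: enn2real_leI)

lemma Gcal_in_subprob_algebra:
  assumes "G \<in> Gcal"
  shows "G \<in> space (subprob_algebra borel)"
proof -
  have "subprob_space G"
    using assms by (intro subprob_spaceI) (auto simp: Gcal_space Gcal_def)
  then show ?thesis
    using assms by (simp add: space_subprob_algebra Gcal_sets)
qed

lemma return_in_Gcal: "x \<ge> 0 \<Longrightarrow> return borel x \<in> Gcal"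
  unfolding Gcal_def by auto

lemma distr_in_Gcal:
  assumes "sets G = sets borel" "emeasure G UNIV \<le> 1"
    and "f \<in> borel_measurable borel" "\<And>x. f x \<ge> 0"
  shows "distr G borel f \<in> Gcal"
proof -
  have "space G = UNIV"
    using sets_eq_imp_space_eq[OF assms(1)] by simp
  moreover have "f \<in> borel_measurable G"
    using assms(1,3) measurable_cong_sets[OF assms(1) refl] by simp
  moreover have "f -` {..<0} = {}"
    using leD[OF assms(4)] by auto
  ultimately show ?thesis
    unfolding Gcal_def using assms(2) by (simp add: emeasure_distr)
qed

lemma integrable_pF_comp:
  assumes "G \<in> Gcal" "a > 0" "b > 0" "l > 0" "g \<in> borel_measurable borel"
  shows "integrable G (\<lambda>x. pF a b l (g x))"
proof -
  interpret finite_measure G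
    using Gcal_finite_measure[OF assms(1)] .
  show ?thesis
    using assms pF_le_mode pF_nonneg
    by (intro integrable_const_bound[where B = "pF a b l l"]) (auto simp: Gcal_measurable)
qed

lemma fG_nonneg: "fG a b G l \<ge> 0"
  unfolding fG_def by (intro integral_nonneg_AE) (auto simp: pF_nonneg)

lemma fG_le_mass_mul_mode:
  assumes "G \<in> Gcal" "a > 0" "b > 0" "l > 0"
  shows "fG a b G l \<le> measure G UNIV * pF a b l l"
proof -
  interpret finite_measure G
    using Gcal_finite_measure[OF assms(1)] .
  have "fG a b G l \<le> (\<integral>x. pF a b l l \<partial>G)"
    unfolding fG_def using assms integrable_pF_comp[OF assms, of "\<lambda>x. x"] pF_le_mode
    by (intro integral_mono) auto
  also have "\<dots> = measure G UNIV * pF a b l l"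
    using Gcal_space[OF assms(1)] by simp
  finally show ?thesis .
qed

lemma fG_le_mode:
  assumes "G \<in> Gcal" "a > 0" "b > 0" "l > 0"
  shows "fG a b G l \<le> pF a b l l"
  using fG_le_mass_mul_mode[OF assms] Gcal_measure_le_1[OF assms(1)] pF_nonneg[of a b l l]
  by (meson dual_order.trans mult_left_le_one_le measure_nonneg)

lemma measure_pos_of_fG_pos:
  assumes "G \<in> Gcal" "a > 0" "b > 0" "l > 0" "fG a b G l > 0"
  shows "measure G UNIV > 0"
proof -
  have "0 < measure G UNIV * pF a b l l"
    using assms(5) fG_le_mass_mul_mode[OF assms(1-4)] by linarith
  then show ?thesis
    using measure_nonneg[of G UNIV] pF_nonneg[of a b l l] by (simp add: zero_less_mult_iff)
qed

lemma fG_return: "fG a b (return borel x) l = pF a b l x"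
  unfolding fG_def by (rule integral_return) auto

lemma fG_distr:
  assumes "sets G = sets borel" "f \<in> borel_measurable borel"
  shows "fG a b (distr G borel f) l = (\<integral>x. pF a b l (f x) \<partial>G)"
  unfolding fG_def using assms measurable_cong_sets[OF assms(1) refl]
  by (subst integral_distr) auto

text \<open>Clamping to an interval that contains \<open>l\<close> moves every point towards the mode \<open>l\<close>
  of \<open>pF a b l\<close>.\<close>
lemma fG_le_fG_distr_clamp:
  assumes "G \<in> Gcal" "a > 0" "b > 0" "0 < lo" "lo \<le> l" "l \<le> hi"
  shows "fG a b G l \<le> fG a b (distr G borel (clamp lo hi)) l"
  unfolding fG_distr[OF Gcal_sets[OF assms(1)] clamp_measurable]
  unfolding fG_def using assms
  by (intro integral_mono integrable_pF_comp pF_le_pF_clamp) auto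

lemma fG_less_fG_distr_clamp:
  assumes G: "G \<in> Gcal" and ab: "a > 0" "b > 0" and l: "0 < lo" "lo \<le> l" "l \<le> hi"
    and outside: "emeasure G (UNIV - {lo..hi}) \<noteq> 0"
  shows "fG a b G l < fG a b (distr G borel (clamp lo hi)) l"
proof -
  define h where "h x = pF a b l (clamp lo hi x) - pF a b l x" for x
  have h_nonneg: "h x \<ge> 0" for x
    using pF_le_pF_clamp[OF ab l] by (simp add: h_def)
  have h_integrable: "integrable G h"
    unfolding h_def using G ab l by (intro Bochner_Integration.integrable_diff integrable_pF_comp) auto
  have diff: "fG a b (distr G borel (clamp lo hi)) l - fG a b G l = integral\<^sup>L G h"
    unfolding fG_distr[OF Gcal_sets[OF G] clamp_measurable] unfolding fG_def h_def
    using G ab l by (intro Bochner_Integration.integral_diff[symmetric] integrable_pF_comp) auto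
  have "integral\<^sup>L G h \<noteq> 0"
  proof
    assume "integral\<^sup>L G h = 0"
    then have "AE x in G. h x = 0"
      using integral_nonneg_eq_0_iff_AE[OF h_integrable] h_nonneg by simp
    then have "AE x in G. x \<in> {lo..hi}"
      by eventually_elim (use pF_less_pF_clamp[OF ab l] in \<open>force simp: h_def\<close>)
    then have "emeasure G (UNIV - {lo..hi}) = 0"
      by (subst (asm) AE_iff_measurable[where N = "UNIV - {lo..hi}"])
         (auto simp: Gcal_space[OF G] Gcal_sets[OF G])
    with outside show False ..
  qed
  moreover have "integral\<^sup>L G h \<ge> 0"
    using h_nonneg by (intro integral_nonneg_AE) auto
  ultimately show ?thesis
    using diff by linarith
qed

definition normalize_measure :: "real measure \<Rightarrow> real measure" where
  "normalize_measure G = density G (\<lambda>_. ennreal (1 / measure G UNIV))"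

lemma emeasure_normalize_measure:
  "G \<in> Gcal \<Longrightarrow> A \<in> sets borel
    \<Longrightarrow> emeasure (normalize_measure G) A = ennreal (1 / measure G UNIV) * emeasure G A"
  unfolding normalize_measure_def by (subst emeasure_density_const) (auto simp: Gcal_sets)

lemma normalize_measure_in_Gcal:
  assumes G: "G \<in> Gcal" and pos: "measure G UNIV > 0"
  shows "normalize_measure G \<in> Gcal" "emeasure (normalize_measure G) UNIV = 1"
proof -
  interpret finite_measure G
    using Gcal_finite_measure[OF G] .
  have "emeasure (normalize_measure G) UNIV
      = ennreal (1 / measure G UNIV) * ennreal (measure G UNIV)"
    using G by (simp add: emeasure_normalize_measure emeasure_eq_measure)
  also have "\<dots> = 1"
    using pos by (simp flip: ennreal_mult)
  finally show "emeasure (normalize_measure G) UNIV = 1" .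
  moreover have "sets (normalize_measure G) = sets borel"
    using G by (simp add: normalize_measure_def Gcal_sets)
  ultimately show "normalize_measure G \<in> Gcal"
    using G unfolding Gcal_def by (simp add: emeasure_normalize_measure[OF G])
qed

lemma fG_normalize_measure:
  assumes "G \<in> Gcal"
  shows "fG a b (normalize_measure G) l = fG a b G l / measure G UNIV"
proof -
  have "fG a b (normalize_measure G) l = (\<integral>x. (1 / measure G UNIV) *\<^sub>R pF a b l x \<partial>G)"
    unfolding fG_def normalize_measure_def using assms
    by (intro integral_density) (auto simp: Gcal_measurable)
  then show ?thesis
    unfolding fG_def by simp
qed

definition mix_measure :: "real \<Rightarrow> real measure \<Rightarrow> real measure \<Rightarrow> real measure" where
  "mix_measure t G H = measure_pmf (bernoulli_pmf t) \<bind> (\<lambda>c. if c then G else H)"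

lemma mix_measure_kernel_measurable:
  "G \<in> Gcal \<Longrightarrow> H \<in> Gcal \<Longrightarrow>
    (\<lambda>c. if c then G else H) \<in> measurable (measure_pmf (bernoulli_pmf t)) (subprob_algebra borel)"
  by (simp add: measurable_pmf_measure1 Gcal_in_subprob_algebra)

lemma emeasure_mix_measure:
  assumes "G \<in> Gcal" "H \<in> Gcal" "0 \<le> t" "t \<le> 1" "A \<in> sets borel"
  shows "emeasure (mix_measure t G H) A = emeasure G A * t + emeasure H A * (1 - t)"
proof -
  have "emeasure (mix_measure t G H) A
      = (\<integral>\<^sup>+c. emeasure (if c then G else H) A \<partial>measure_pmf (bernoulli_pmf t))"
    unfolding mix_measure_def
    by (rule emeasure_bind[OF _ mix_measure_kernel_measurable[OF assms(1,2)] assms(5)]) simp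
  then show ?thesis
    using assms by (simp add: nn_integral_bernoulli_pmf)
qed

lemma mix_measure_in_Gcal:
  assumes G: "G \<in> Gcal" and H: "H \<in> Gcal" and t: "0 \<le> t" "t \<le> 1"
  shows "mix_measure t G H \<in> Gcal"
proof -
  have "emeasure G UNIV * t + emeasure H UNIV * (1 - t) \<le> 1 * ennreal t + 1 * ennreal (1 - t)"
    using G H by (intro add_mono mult_right_mono) (auto simp: Gcal_def)
  also have "\<dots> = 1"
    using t by (simp flip: ennreal_plus)
  finally show ?thesis
    using G H t emeasure_mix_measure[OF G H t]
    unfolding Gcal_def mix_measure_def
    by (auto simp: sets_bind[where N = borel] Gcal_sets)
qed

lemma fG_mix_measure:
  assumes G: "G \<in> Gcal" and H: "H \<in> Gcal" and t: "0 \<le> t" "t \<le> 1"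
    and ab: "a > 0" "b > 0" and l: "l > 0"
  shows "fG a b (mix_measure t G H) l = t * fG a b G l + (1 - t) * fG a b H l"
proof -
  have nn: "(\<integral>\<^sup>+x. ennreal (pF a b l x) \<partial>M) = ennreal (fG a b M l)" if "M \<in> Gcal" for M
    unfolding fG_def using that ab l integrable_pF_comp[of M a b l "\<lambda>x. x"]
    by (intro nn_integral_eq_integral) (auto simp: pF_nonneg)
  have "ennreal (fG a b (mix_measure t G H) l) = (\<integral>\<^sup>+x. ennreal (pF a b l x) \<partial>mix_measure t G H)"
    using nn[OF mix_measure_in_Gcal[OF G H t]] ..
  also have "\<dots> = (\<integral>\<^sup>+c. \<integral>\<^sup>+x. ennreal (pF a b l x) \<partial>(if c then G else H)
      \<partial>measure_pmf (bernoulli_pmf t))"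
    unfolding mix_measure_def
    by (rule nn_integral_bind[OF _ mix_measure_kernel_measurable[OF G H]]) auto
  also have "\<dots> = ennreal (fG a b G l) * ennreal t + ennreal (fG a b H l) * ennreal (1 - t)"
    using t by (simp add: nn[OF G] nn[OF H])
  also have "\<dots> = ennreal (t * fG a b G l) + ennreal ((1 - t) * fG a b H l)"
    using t by (simp add: ennreal_mult' mult.commute)
  also have "\<dots> = ennreal (t * fG a b G l + (1 - t) * fG a b H l)"
    using t fG_nonneg[of a b G l] fG_nonneg[of a b H l] by (simp add: ennreal_plus)
  finally have "ennreal (fG a b (mix_measure t G H) l)
      = ennreal (t * fG a b G l + (1 - t) * fG a b H l)" .
  moreover have "t * fG a b G l + (1 - t) * fG a b H l \<ge> 0"
    using t fG_nonneg[of a b G l] fG_nonneg[of a b H l] by simp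
  ultimately show ?thesis
    using fG_nonneg[of a b "mix_measure t G H" l] by (simp only: ennreal_inj)
qed

lemma distr_clamp_in_Gcal:
  assumes "sets G = sets borel" "emeasure G UNIV \<le> 1" "0 \<le> lo" "lo \<le> hi"
  shows "distr G borel (clamp lo hi) \<in> Gcal"
  using assms by (intro distr_in_Gcal) (auto simp: clamp_real)

lemma AE_distr_clamp_in_interval:
  fixes G :: "real measure"
  assumes "sets G = sets borel" "lo \<le> hi"
  shows "AE x in distr G borel (clamp lo hi). x \<in> {lo..hi}"
proof -
  have "clamp lo hi \<in> borel_measurable G"
    using clamp_measurable by (simp add: measurable_cong_sets[OF assms(1) refl])
  then show ?thesis
    using assms(2) by (subst AE_distr_iff) (simp_all add: clamp_real)
qed

text \<open>Helly's selection theorem, applied to probability measures on a fixed compact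
  interval of \<open>(0, \<infinity>)\<close>, where every \<open>pF a b l\<close> is bounded and continuous.\<close>
lemma fG_convergent_subsequence:
  fixes H :: "nat \<Rightarrow> real measure"
  assumes ab: "a > 0" "b > 0" and lo: "0 < lo" "lo \<le> hi"
    and H: "\<And>k. real_distribution (H k)" "\<And>k. AE x in H k. x \<in> {lo..hi}"
  shows "\<exists>r G. strict_mono r \<and> G \<in> Gcal \<and>
    (\<forall>l>0. (\<lambda>k. fG a b (H (r k)) l) \<longlonglongrightarrow> fG a b G l)"
proof -
  have H_mass: "measure (H k) {lo - 1<..hi} = 1" for k
  proof -
    interpret real_distribution "H k"
      by (rule H(1))
    have "AE x in H k. x \<in> {lo - 1<..hi}"
      using H(2)[of k] by eventually_elim auto
    then show ?thesis
      by (rule AE_in_set_eq_1[THEN iffD1, rotated]) simp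
  qed
  have "tight H"
    unfolding tight_def
  proof (intro conjI allI impI)
    fix e :: real assume "e > 0"
    then show "\<exists>a b. a < b \<and> (\<forall>k. 1 - e < measure (H k) {a<..b})"
      using lo H_mass by (intro exI[of _ "lo - 1"] exI[of _ hi]) auto
  qed (rule H(1))
  then obtain r M where r: "strict_mono r" and M: "real_distribution M"
    and weak: "weak_conv_m (H \<circ> id \<circ> r) M"
    using tight_imp_convergent_subsubsequence[OF _ strict_mono_id] by blast
  interpret M: real_distribution M
    by (rule M)
  define G where "G = distr M borel (clamp lo hi)"
  have "G \<in> Gcal"
    unfolding G_def using lo M.emeasure_space_1 M.events_eq_borel
    by (intro distr_clamp_in_Gcal) (auto simp: M.space_eq_univ)
  moreover have "(\<lambda>k. fG a b (H (r k)) l) \<longlonglongrightarrow> fG a b G l" if l: "l > 0" for l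
  proof -
    have "fG a b (H k) l = (\<integral>x. pF a b l (clamp lo hi x) \<partial>H k)" for k
    proof -
      interpret real_distribution "H k"
        by (rule H(1))
      have "AE x in H k. pF a b l x = pF a b l (clamp lo hi x)"
        using H(2)[of k] by eventually_elim (simp add: clamp_real lo(2))
      then show ?thesis
        unfolding fG_def using measurable_cong_sets[OF events_eq_borel refl]
        by (intro integral_cong_AE) simp_all
    qed
    moreover have "(\<lambda>k. \<integral>x. pF a b l (clamp lo hi x) \<partial>(H \<circ> id \<circ> r) k)
        \<longlonglongrightarrow> (\<integral>x. pF a b l (clamp lo hi x) \<partial>M)"
    proof (rule weak_conv_imp_integral_bdd_continuous_conv[OF _ M weak])
      show "real_distribution ((H \<circ> id \<circ> r) k)" for k
        using H(1) by simp
      have "continuous_on {lo..hi} (pF a b l)"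
        by (rule continuous_on_subset[OF pF_continuous_on[OF ab l]]) (use lo in auto)
      then show "isCont (\<lambda>x. pF a b l (clamp lo hi x)) x" for x
        using clamp_continuous_at[of lo hi "pF a b l" x] by simp
      show "norm (pF a b l (clamp lo hi x)) \<le> pF a b l l" for x
        using pF_nonneg pF_le_mode[OF ab l] by simp
    qed
    ultimately show ?thesis
      unfolding G_def using M.events_eq_borel by (simp add: fG_distr)
  qed
  ultimately show ?thesis
    using r by blast
qed

section \<open>The log-likelihood\<close>

definition ln_ereal :: "real \<Rightarrow> ereal" where
  "ln_ereal v = (if v > 0 then ereal (ln v) else -\<infinity>)"

lemma loglik_eq_sum_ln_ereal: "loglik a b n L G = (\<Sum>i<n. ln_ereal (fG a b G (L i)))"
  unfolding loglik_def ln_ereal_def ..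

lemma ln_ereal_mono: "x \<le> y \<Longrightarrow> ln_ereal x \<le> ln_ereal y"
  unfolding ln_ereal_def by auto

lemma loglik_mono:
  "(\<And>i. i < n \<Longrightarrow> fG a b G (L i) \<le> fG a b H (L i)) \<Longrightarrow> loglik a b n L G \<le> loglik a b n L H"
  unfolding loglik_eq_sum_ln_ereal by (intro sum_mono ln_ereal_mono) auto

lemma loglik_eq_sum_ln:
  "(\<And>i. i < n \<Longrightarrow> fG a b G (L i) > 0)
    \<Longrightarrow> loglik a b n L G = ereal (\<Sum>i<n. ln (fG a b G (L i)))"
  unfolding loglik_def sum_ereal[symmetric] by (intro sum.cong) auto

lemma loglik_neq_minf_iff: "loglik a b n L G \<noteq> -\<infinity> \<longleftrightarrow> (\<forall>i<n. fG a b G (L i) > 0)"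
proof
  assume finite: "loglik a b n L G \<noteq> -\<infinity>"
  show "\<forall>i<n. fG a b G (L i) > 0"
  proof (intro allI impI)
    fix i assume i: "i < n"
    show "fG a b G (L i) > 0"
    proof (rule ccontr)
    assume "\<not> fG a b G (L i) > 0"
    then have "ln_ereal (fG a b G (L i)) = -\<infinity>"
      by (simp add: ln_ereal_def)
    moreover have "(\<Sum>j\<in>{..<n} - {i}. ln_ereal (fG a b G (L j))) \<noteq> \<infinity>"
      by (subst sum_Pinfty) (auto simp: ln_ereal_def)
    moreover have "loglik a b n L G
        = ln_ereal (fG a b G (L i)) + (\<Sum>j\<in>{..<n} - {i}. ln_ereal (fG a b G (L j)))"
      unfolding loglik_eq_sum_ln_ereal using i by (subst sum.remove[of _ i]) auto
    ultimately show False
      using finite by simp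
    qed
  qed
qed (simp add: loglik_eq_sum_ln)

lemma loglik_strict_mono:
  assumes "n \<ge> 1" "\<And>i. i < n \<Longrightarrow> fG a b G (L i) > 0"
    and "\<And>i. i < n \<Longrightarrow> fG a b G (L i) < fG a b H (L i)"
  shows "loglik a b n L G < loglik a b n L H"
proof -
  have H: "fG a b H (L i) > 0" if "i < n" for i
    using assms that by (meson less_trans)
  have "(\<Sum>i<n. ln (fG a b G (L i))) < (\<Sum>i<n. ln (fG a b H (L i)))"
    using assms H by (intro sum_strict_mono) (auto simp: lessThan_empty_iff)
  then show ?thesis
    using assms H by (simp add: loglik_eq_sum_ln)
qed

lemma divide_one_plus_le_ln: "1 + x > 0 \<Longrightarrow> x / (1 + x) \<le> ln (1 + (x::real))"
proof -
  assume pos: "1 + x > 0"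
  have "ln (1 / (1 + x)) \<le> 1 / (1 + x) - 1"
    using pos by (intro ln_le_minus_one) simp
  moreover have "1 / (1 + x) - 1 = - (x / (1 + x))"
    using pos by (simp add: field_simps)
  ultimately show ?thesis
    using pos by (simp add: ln_div)
qed

text \<open>First-order condition for a maximum of the concave map
  \<open>t \<mapsto> \<Sum>\<^sub>i ln ((1 - t) A\<^sub>i + t B\<^sub>i)\<close> at \<open>t = 0\<close>, derived without differentiating:
  with \<open>r\<^sub>i = B\<^sub>i / A\<^sub>i - 1\<close>, the bound above gives
  \<open>t \<Sum>\<^sub>i r\<^sub>i / (1 + t r\<^sub>i) \<le> 0\<close> for \<open>t \<in> (0, 1)\<close>, and one lets \<open>t \<rightarrow> 0\<close>.\<close>
lemma sum_divide_le_card_of_segment_max: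
  fixes A B :: "'i \<Rightarrow> real"
  assumes A: "\<And>i. i \<in> I \<Longrightarrow> A i > 0" and B: "\<And>i. i \<in> I \<Longrightarrow> B i \<ge> 0"
    and opt: "\<And>t. 0 < t \<Longrightarrow> t < 1
      \<Longrightarrow> (\<Sum>i\<in>I. ln (t * B i + (1 - t) * A i)) \<le> (\<Sum>i\<in>I. ln (A i))"
  shows "(\<Sum>i\<in>I. B i / A i) \<le> card I"
proof -
  define r where "r i = B i / A i - 1" for i
  define F where "F t = (\<Sum>i\<in>I. r i / (1 + t * r i))" for t
  have F_nonpos: "F t \<le> 0" if t: "0 < t" "t < 1" for t
  proof -
    have pos: "1 + t * r i > 0" if i: "i \<in> I" for i
    proof -
      have "1 + t * r i = (1 - t) + t * (B i / A i)"
        by (simp add: r_def algebra_simps)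
      moreover have "t * (B i / A i) \<ge> 0"
        using A[OF i] B[OF i] t by simp
      ultimately show ?thesis
        using t by linarith
    qed
    have "t * F t = (\<Sum>i\<in>I. t * r i / (1 + t * r i))"
      unfolding F_def by (simp add: sum_distrib_left)
    also have "\<dots> \<le> (\<Sum>i\<in>I. ln (1 + t * r i))"
      using pos by (intro sum_mono divide_one_plus_le_ln)
    also have "\<dots> = (\<Sum>i\<in>I. ln (t * B i + (1 - t) * A i) - ln (A i))"
    proof (intro sum.cong refl)
      fix i assume i: "i \<in> I"
      have "t * B i + (1 - t) * A i = A i * (1 + t * r i)"
        using A[OF i] by (simp add: r_def field_simps)
      then show "ln (1 + t * r i) = ln (t * B i + (1 - t) * A i) - ln (A i)"
        using A[OF i] pos[OF i] by (simp add: ln_mult)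
    qed
    also have "\<dots> \<le> 0"
      using opt[OF t] by (simp add: sum_subtractf)
    finally show ?thesis
      using t by (simp add: mult_le_0_iff)
  qed
  have "(F \<longlongrightarrow> F 0) (at_right 0)"
    unfolding F_def by (intro tendsto_intros) auto
  moreover have "eventually (\<lambda>t. F t \<le> 0) (at_right 0)"
    by (rule eventually_at_rightI[of 0 1]) (auto intro: F_nonpos)
  ultimately have "F 0 \<le> 0"
    by (rule tendsto_upperbound) simp
  then show ?thesis
    by (simp add: F_def r_def sum_subtractf)
qed

section \<open>Maximum likelihood estimators\<close>

locale npmle_setting =
  fixes a b n :: nat and L :: "nat \<Rightarrow> real"
  assumes a_pos: "a > 0" and b_pos: "b > 0" and n_pos: "n \<ge> 1"
    and L_pos: "\<And>i. i < n \<Longrightarrow> L i > 0"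
begin

definition lo :: real where "lo = Min (L ` {..<n})"

definition hi :: real where "hi = Max (L ` {..<n})"

lemma lo_le_L: "i < n \<Longrightarrow> lo \<le> L i"
  unfolding lo_def by (rule Min_le) auto

lemma L_le_hi: "i < n \<Longrightarrow> L i \<le> hi"
  unfolding hi_def by (rule Max_ge) auto

lemma lo_pos: "lo > 0"
proof -
  have "L 0 \<in> L ` {..<n}"
    using n_pos by simp
  then have "lo \<in> L ` {..<n}"
    unfolding lo_def by (intro Min_in) auto
  then show ?thesis
    using L_pos by auto
qed

lemma lo_le_hi: "lo \<le> hi"
  using lo_le_L[of 0] L_le_hi[of 0] n_pos by simp

lemma loglik_return_neq_minf: "loglik a b n L (return borel (L 0)) \<noteq> -\<infinity>"
  using n_pos L_pos[of 0] by (simp add: loglik_neq_minf_iff fG_return pF_pos a_pos b_pos L_pos)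

lemma loglik_le_sum_ln_mode:
  "G \<in> Gcal \<Longrightarrow> loglik a b n L G \<le> ereal (\<Sum>i<n. ln (pF a b (L i) (L i)))"
  unfolding loglik_eq_sum_ln_ereal sum_ereal[symmetric]
  by (intro sum_mono) (auto simp: ln_ereal_def fG_le_mode a_pos b_pos L_pos pF_pos)

lemma NPMLE_fG_pos:
  assumes "is_NPMLE a b n L G" "i < n"
  shows "fG a b G (L i) > 0"
proof -
  have "loglik a b n L (return borel (L 0)) \<le> loglik a b n L G"
    using assms(1) return_in_Gcal[of "L 0"] L_pos[of 0] n_pos unfolding is_NPMLE_def by auto
  then have "loglik a b n L G \<noteq> -\<infinity>"
    using loglik_return_neq_minf by auto
  then show ?thesis
    using assms(2) by (simp add: loglik_neq_minf_iff)
qed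

lemma NPMLE_not_strictly_improvable:
  assumes "is_NPMLE a b n L G" "H \<in> Gcal"
    and "\<And>i. i < n \<Longrightarrow> fG a b G (L i) < fG a b H (L i)"
  shows False
  using loglik_strict_mono[OF n_pos NPMLE_fG_pos[OF assms(1)] assms(3)] assms(1,2)
  unfolding is_NPMLE_def by fastforce

lemma NPMLE_null_outside:
  assumes NPMLE: "is_NPMLE a b n L G"
  shows "emeasure G (UNIV - {lo..hi}) = 0"
proof (rule ccontr)
  assume outside: "emeasure G (UNIV - {lo..hi}) \<noteq> 0"
  have G: "G \<in> Gcal"
    using NPMLE by (simp add: is_NPMLE_def)
  show False
  proof (rule NPMLE_not_strictly_improvable[OF NPMLE])
    show "distr G borel (clamp lo hi) \<in> Gcal"
      using G lo_pos lo_le_hi by (intro distr_clamp_in_Gcal) (auto simp: Gcal_def)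
    show "fG a b G (L i) < fG a b (distr G borel (clamp lo hi)) (L i)" if "i < n" for i
      using that G outside lo_pos lo_le_L L_le_hi a_pos b_pos
      by (intro fG_less_fG_distr_clamp) auto
  qed
qed

lemma NPMLE_null_zero:
  assumes NPMLE: "is_NPMLE a b n L G"
  shows "emeasure G {0} = 0"
proof -
  have "emeasure G {0} \<le> emeasure G (UNIV - {lo..hi})"
    using NPMLE lo_pos by (intro emeasure_mono) (auto simp: is_NPMLE_def Gcal_sets)
  then show ?thesis
    using NPMLE_null_outside[OF NPMLE] by simp
qed

lemma NPMLE_mass_one:
  assumes NPMLE: "is_NPMLE a b n L G"
  shows "emeasure G UNIV = 1"
proof (rule ccontr)
  assume mass: "emeasure G UNIV \<noteq> 1"
  have G: "G \<in> Gcal"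
    using NPMLE by (simp add: is_NPMLE_def)
  interpret finite_measure G
    using Gcal_finite_measure[OF G] .
  have pos: "measure G UNIV > 0"
    using G a_pos b_pos L_pos[of 0] NPMLE_fG_pos[OF NPMLE, of 0] n_pos
    by (intro measure_pos_of_fG_pos) auto
  have less_1: "measure G UNIV < 1"
    using Gcal_measure_le_1[OF G] mass by (auto simp: emeasure_eq_measure)
  show False
  proof (rule NPMLE_not_strictly_improvable[OF NPMLE])
    show "normalize_measure G \<in> Gcal"
      using G pos by (rule normalize_measure_in_Gcal)
    show "fG a b G (L i) < fG a b (normalize_measure G) (L i)" if "i < n" for i
      using NPMLE_fG_pos[OF NPMLE that] pos less_1
      by (simp add: fG_normalize_measure[OF G] less_divide_eq)
  qed
qed

lemma NPMLE_first_order: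
  assumes NPMLE: "is_NPMLE a b n L Gh" and G: "G \<in> Gcal"
  shows "(\<Sum>i<n. fG a b G (L i) / fG a b Gh (L i)) \<le> n"
proof -
  have Gh: "Gh \<in> Gcal"
    using NPMLE by (simp add: is_NPMLE_def)
  have "(\<Sum>i<n. fG a b G (L i) / fG a b Gh (L i)) \<le> card {..<n}"
  proof (rule sum_divide_le_card_of_segment_max)
    fix t :: real assume t: "0 < t" "t < 1"
    have mix: "fG a b (mix_measure t G Gh) (L i) = t * fG a b G (L i) + (1 - t) * fG a b Gh (L i)"
      if "i < n" for i
      using fG_mix_measure[OF G Gh _ _ a_pos b_pos L_pos[OF that]] t by simp
    have mix_pos: "fG a b (mix_measure t G Gh) (L i) > 0" if "i < n" for i
      using mix[OF that] t fG_nonneg[of a b G "L i"] NPMLE_fG_pos[OF NPMLE that]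
      by (simp add: add_nonneg_pos)
    have "loglik a b n L (mix_measure t G Gh) \<le> loglik a b n L Gh"
      using NPMLE mix_measure_in_Gcal[OF G Gh] t unfolding is_NPMLE_def by simp
    then show "(\<Sum>i<n. ln (t * fG a b G (L i) + (1 - t) * fG a b Gh (L i)))
        \<le> (\<Sum>i<n. ln (fG a b Gh (L i)))"
      using mix_pos NPMLE_fG_pos[OF NPMLE] by (simp add: loglik_eq_sum_ln mix)
  qed (use NPMLE_fG_pos[OF NPMLE] fG_nonneg in auto)
  then show ?thesis
    by simp
qed

lemma fG_ge_exp_of_loglik_ge:
  assumes G: "G \<in> Gcal" and c: "ereal c \<le> loglik a b n L G" and i: "i < n"
  shows "exp (c - (\<Sum>j\<in>{..<n} - {i}. ln (pF a b (L j) (L j)))) \<le> fG a b G (L i)"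
proof -
  have pos: "fG a b G (L j) > 0" if "j < n" for j
    using c loglik_neq_minf_iff[of a b n L G] that by auto
  have "c \<le> (\<Sum>j<n. ln (fG a b G (L j)))"
    using c by (simp add: loglik_eq_sum_ln pos)
  also have "\<dots> = ln (fG a b G (L i)) + (\<Sum>j\<in>{..<n} - {i}. ln (fG a b G (L j)))"
    using i by (subst sum.remove[of _ i]) auto
  also have "\<dots> \<le> ln (fG a b G (L i)) + (\<Sum>j\<in>{..<n} - {i}. ln (pF a b (L j) (L j)))"
    using G pos a_pos b_pos L_pos by (intro add_left_mono sum_mono ln_mono fG_le_mode) auto
  finally have "c - (\<Sum>j\<in>{..<n} - {i}. ln (pF a b (L j) (L j))) \<le> ln (fG a b G (L i))"
    by linarith
  then show ?thesis
    using ln_ge_iff[OF pos[OF i]] by blast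
qed

text \<open>The lower bound of the previous lemma keeps the limits away from \<open>0\<close>, so that \<open>ln\<close>
  passes to the limit.\<close>
lemma loglik_ge_of_limit:
  assumes H: "\<And>k. H k \<in> Gcal" and G: "G \<in> Gcal"
    and lim: "\<And>i. i < n \<Longrightarrow> (\<lambda>k. fG a b (H k) (L i)) \<longlonglongrightarrow> fG a b G (L i)"
    and c: "\<And>k. ereal (c k) \<le> loglik a b n L (H k)" and c_lim: "c \<longlonglongrightarrow> c\<^sub>0"
  shows "ereal c\<^sub>0 \<le> loglik a b n L G"
proof -
  define R where "R i = (\<Sum>j\<in>{..<n} - {i}. ln (pF a b (L j) (L j)))" for i
  have pos: "fG a b G (L i) > 0" if i: "i < n" for i
  proof -
    have "(\<lambda>k. exp (c k - R i)) \<longlonglongrightarrow> exp (c\<^sub>0 - R i)"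
      by (intro tendsto_intros c_lim)
    then have "exp (c\<^sub>0 - R i) \<le> fG a b G (L i)"
      by (rule LIMSEQ_le[OF _ lim[OF i]]) (use fG_ge_exp_of_loglik_ge[OF H c i] in \<open>auto simp: R_def\<close>)
    then show ?thesis
      by (meson exp_gt_zero less_le_trans)
  qed
  have "c\<^sub>0 \<le> (\<Sum>i<n. ln (fG a b G (L i)))"
  proof (rule LIMSEQ_le[OF c_lim])
    show "(\<lambda>k. \<Sum>i<n. ln (fG a b (H k) (L i))) \<longlonglongrightarrow> (\<Sum>i<n. ln (fG a b G (L i)))"
      using pos by (intro tendsto_sum tendsto_ln lim) (auto simp: less_imp_neq[symmetric])
    have "c k \<le> (\<Sum>i<n. ln (fG a b (H k) (L i)))" for k
    proof -
      have "loglik a b n L (H k) \<noteq> -\<infinity>"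
        using c[of k] by auto
      then show ?thesis
        using c[of k] by (simp add: loglik_neq_minf_iff loglik_eq_sum_ln)
    qed
    then show "\<exists>N. \<forall>k\<ge>N. c k \<le> (\<Sum>i<n. ln (fG a b (H k) (L i)))"
      by blast
  qed
  then show ?thesis
    using pos by (simp add: loglik_eq_sum_ln)
qed

lemma exists_concentrated_improvement:
  assumes G: "G \<in> Gcal" and finite: "loglik a b n L G \<noteq> -\<infinity>"
  shows "\<exists>H. H \<in> Gcal \<and> real_distribution H \<and> (AE x in H. x \<in> {lo..hi})
    \<and> loglik a b n L G \<le> loglik a b n L H"
proof -
  have pos: "measure G UNIV > 0"
    using finite n_pos
    by (intro measure_pos_of_fG_pos[OF G a_pos b_pos L_pos[of 0]]) (auto simp: loglik_neq_minf_iff)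
  define N where "N = normalize_measure G"
  define H where "H = distr N borel (clamp lo hi)"
  have N: "N \<in> Gcal" "emeasure N UNIV = 1"
    unfolding N_def using normalize_measure_in_Gcal[OF G pos] by auto
  have "H \<in> Gcal"
    unfolding H_def using N lo_pos lo_le_hi by (intro distr_clamp_in_Gcal) (auto simp: Gcal_sets)
  moreover have "real_distribution H"
  proof -
    have "emeasure H (space H) = 1"
      unfolding H_def using N by (simp add: emeasure_distr Gcal_space Gcal_measurable)
    then show ?thesis
      unfolding real_distribution_def real_distribution_axioms_def H_def
      by (auto intro: prob_spaceI)
  qed
  moreover have "AE x in H. x \<in> {lo..hi}"
    unfolding H_def using N lo_le_hi by (intro AE_distr_clamp_in_interval) (auto simp: Gcal_sets)
  moreover have "loglik a b n L G \<le> loglik a b n L H"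
  proof (rule loglik_mono)
    fix i assume i: "i < n"
    have "fG a b G (L i) \<le> fG a b G (L i) / measure G UNIV"
      using pos Gcal_measure_le_1[OF G] fG_nonneg[of a b G "L i"]
      by (simp add: le_divide_eq mult_left_le)
    also have "\<dots> = fG a b N (L i)"
      unfolding N_def by (simp add: fG_normalize_measure[OF G])
    also have "\<dots> \<le> fG a b H (L i)"
      unfolding H_def using N i lo_pos lo_le_L L_le_hi a_pos b_pos
      by (intro fG_le_fG_distr_clamp) auto
    finally show "fG a b G (L i) \<le> fG a b H (L i)" .
  qed
  ultimately show ?thesis
    by blast
qed

lemma NPMLE_exists: "\<exists>G. is_NPMLE a b n L G"
proof -
  define s where "s = (SUP G\<in>Gcal. loglik a b n L G)"
  have le_s: "loglik a b n L G \<le> s" if "G \<in> Gcal" for G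
    unfolding s_def using that by (rule SUP_upper)
  have "s \<le> ereal (\<Sum>i<n. ln (pF a b (L i) (L i)))"
    unfolding s_def by (rule SUP_least) (rule loglik_le_sum_ln_mode)
  moreover have "s \<noteq> -\<infinity>"
    using le_s[OF return_in_Gcal, of "L 0"] L_pos[of 0] n_pos loglik_return_neq_minf by auto
  ultimately obtain S where S: "s = ereal S"
    by (cases s) auto
  define good where "good k H \<longleftrightarrow> H \<in> Gcal \<and> real_distribution H
      \<and> (AE x in H. x \<in> {lo..hi}) \<and> ereal (S - 1 / Suc k) \<le> loglik a b n L H" for k H
  have "\<exists>H. good k H" for k
  proof -
    have "ereal (S - 1 / Suc k) < s"
      using S by simp
    then obtain G where G: "G \<in> Gcal" "ereal (S - 1 / Suc k) < loglik a b n L G"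
      unfolding s_def by (auto simp: less_SUP_iff)
    then have "loglik a b n L G \<noteq> -\<infinity>"
      by auto
    then obtain H where "H \<in> Gcal" "real_distribution H" "AE x in H. x \<in> {lo..hi}"
      "loglik a b n L G \<le> loglik a b n L H"
      using exists_concentrated_improvement[OF G(1)] by blast
    with G(2) show ?thesis
      unfolding good_def by (blast intro: order.trans less_imp_le)
  qed
  then obtain H where "\<And>k. good k (H k)"
    by metis
  then have H: "\<And>k. H k \<in> Gcal" "\<And>k. real_distribution (H k)"
      "\<And>k. AE x in H k. x \<in> {lo..hi}" "\<And>k. ereal (S - 1 / Suc k) \<le> loglik a b n L (H k)"
    by (simp_all add: good_def)
  from fG_convergent_subsequence[where H = H, OF a_pos b_pos lo_pos lo_le_hi H(2,3)]
  obtain r G where r: "strict_mono r" and G: "G \<in> Gcal"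
    and lim: "\<forall>l>0. (\<lambda>k. fG a b (H (r k)) l) \<longlonglongrightarrow> fG a b G l"
    by blast
  have "(\<lambda>k. S - 1 / Suc k) \<longlonglongrightarrow> S - 0"
    using LIMSEQ_inverse_real_of_nat by (intro tendsto_diff tendsto_const) (simp add: inverse_eq_divide)
  then have "(\<lambda>k. S - 1 / Suc (r k)) \<longlonglongrightarrow> S"
    using LIMSEQ_subseq_LIMSEQ[OF _ r] by (simp add: comp_def)
  then have "s \<le> loglik a b n L G"
    unfolding S using H(1,4) lim L_pos
    by (intro loglik_ge_of_limit[where H = "\<lambda>k. H (r k)" and c = "\<lambda>k. S - 1 / Suc (r k)", OF _ G])
       auto
  then show ?thesis
    unfolding is_NPMLE_def using G le_s by (blast intro: order.trans)
qed

end

theorem lemmaS1: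
  fixes nuA nuB n :: nat and lhat :: "nat \<Rightarrow> real"
  assumes "nuA > 0" and "nuB > 0" and "n \<ge> 1"
    and "\<And>i. i < n \<Longrightarrow> lhat i > 0"
  shows "(\<exists>G. is_NPMLE nuA nuB n lhat G)
    \<and> (\<forall>G. is_NPMLE nuA nuB n lhat G \<longrightarrow> emeasure G UNIV = 1 \<and> emeasure G {0} = 0)
    \<and> (\<forall>Ghat. is_NPMLE nuA nuB n lhat Ghat \<longrightarrow> (\<forall>G\<in>Gcal.
          (1 / real n) * (\<Sum>i<n. fG nuA nuB G (lhat i) / fG nuA nuB Ghat (lhat i)) \<le> 1))
    \<and> (\<forall>Ghat. is_NPMLE nuA nuB n lhat Ghat \<longrightarrow>
          emeasure Ghat (UNIV - {Min (lhat ` {..<n}) .. Max (lhat ` {..<n})}) = 0)"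
proof -
  interpret npmle_setting nuA nuB n lhat
    using assms by unfold_locales auto
  have "(1 / real n) * (\<Sum>i<n. fG nuA nuB G (lhat i) / fG nuA nuB Ghat (lhat i)) \<le> 1"
    if "is_NPMLE nuA nuB n lhat Ghat" "G \<in> Gcal" for Ghat G
    using NPMLE_first_order[OF that] assms(3) by (simp add: field_simps)
  then show ?thesis
    using NPMLE_exists NPMLE_mass_one NPMLE_null_zero NPMLE_null_outside[unfolded lo_def hi_def]
    by blast
qed

end
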